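(* Strong Nash equilibria need not exist in the Sharing with Friendship game. Specifically, consider the instance with: - $n=4$ players; - friendship graph $G$ with edge set $\{\{1,2\},\{3,4\}\}$; - $m=2$ machines with values $p_1=2+\epsilon$ and $p_2=4+3\epsilon$. For a suitable $\epsilon>0$ (e.g. any sufficiently small $\epsilon>0$), this instance has no strong Nash equilibrium.
   Context: An instance of the Sharing with Friendship game consists of: - players $N=\{1,\dots,n\}$; - machines $M=\{1,\dots,m\}$ with values $p_1,\dots,p_m\ge0$; - a simple undirected graph $G=(N,E)$. A state is $\vec s\in M^n$, with $X_k(\vec s)=\{i:s_i=k\}$ and $x_k(\vec s)=|X_k(\vec s)|$. The utility of player $i$ with $s_i=k$ is $$u_i(\vec s)=\frac{p_k}{x_k(\vec s)}+\#\{j\in X_k(\vec s):\{i,j\}\in E\}.$$ A state $\vec s$ is a strong Nash equilibrium if for every nonempty coalition $C\subseteq N$ and every joint deviation $\vec s_C'\in M^C$, some $i\in C$ has $u_i(\vec s)\ge u_i(\vec s_C',\vec s_{-C})$. *)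

theory Defs
  imports Complex_Main
begin

text \<open>A state is a function s :: nat => nat
 with s i in {1..m} for every player i in {1..n} (values outside {1..n} irrelevant).\<close>

definition simple_graph :: "nat \<Rightarrow> (nat \<Rightarrow> nat \<Rightarrow> bool) \<Rightarrow> bool" where
  "simple_graph n E \<longleftrightarrow> (\<forall>i j. E i j \<longrightarrow> i \<in> {1..n} \<and> j \<in> {1..n} \<and> i \<noteq> j \<and> E j i)"

definition is_state :: "nat \<Rightarrow> nat \<Rightarrow> (nat \<Rightarrow> nat) \<Rightarrow> bool" where
  "is_state n m s \<longleftrightarrow> (\<forall>i\<in>{1..n}. s i \<in> {1..m})"

definition load_set :: "nat \<Rightarrow> (nat \<Rightarrow> nat) \<Rightarrow> nat \<Rightarrow> nat set" where
  "load_set n s k = {i\<in>{1..n}. s i = k}"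

definition utility :: "nat \<Rightarrow> (nat \<Rightarrow> real) \<Rightarrow> (nat \<Rightarrow> nat \<Rightarrow> bool) \<Rightarrow> (nat \<Rightarrow> nat) \<Rightarrow> nat \<Rightarrow> real" where
  "utility n p E s i =
     p (s i) / real (card (load_set n s (s i))) + real (card {j\<in>load_set n s (s i). E i j})"

definition strong_NE :: "nat \<Rightarrow> nat \<Rightarrow> (nat \<Rightarrow> real) \<Rightarrow> (nat \<Rightarrow> nat \<Rightarrow> bool) \<Rightarrow> (nat \<Rightarrow> nat) \<Rightarrow> bool" where
  "strong_NE n m p E s \<longleftrightarrow> is_state n m s \<and>
     (\<forall>C s'. C \<subseteq> {1..n} \<longrightarrow> C \<noteq> {} \<longrightarrow> (\<forall>i\<in>C. s' i \<in> {1..m}) \<longrightarrow>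
        (\<exists>i\<in>C. utility n p E s i \<ge> utility n p E (\<lambda>j. if j \<in> C then s' j else s j) i))"

definition friend_E :: "nat \<Rightarrow> nat \<Rightarrow> bool" where
  "friend_E i j \<longleftrightarrow> {i, j} = {1, 2} \<or> {i, j} = {3, 4::nat}"

definition machine_values :: "real \<Rightarrow> nat \<Rightarrow> real" where
  "machine_values \<epsilon> k = (if k = 1 then 2 + \<epsilon> else if k = 2 then 4 + 3 * \<epsilon> else 0)"

end

theory Submission
  imports Defs
begin

text \<open>Deviations of a single player or of a pair of friends to a common machine suffice.
  If two friends sit on different machines, one of them gains by joining the other. If both
  pairs share one machine, a single player gains by leaving it. If the pairs sit on different
  machines, the pair on machine 1 gains by joining the other pair, because a quarter of
  \<open>4 + 3\<epsilon>\<close> exceeds half of \<open>2 + \<epsilon>\<close>.\<close>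

lemma load_set_after_move:
  "C \<subseteq> {1..n} \<Longrightarrow> load_set n (\<lambda>j. if j \<in> C then k else s j) k = load_set n s k \<union> C"
  unfolding load_set_def by auto

lemma utility_after_move:
  assumes "C \<subseteq> {1..n}" "i \<in> C"
  shows "utility n p E (\<lambda>j. if j \<in> C then k else s j) i
    = p k / card (load_set n s k \<union> C) + card {j \<in> load_set n s k \<union> C. E i j}"
  using assms by (simp add: utility_def load_set_after_move)

lemma profitable_move_not_strong_NE:
  assumes "C \<subseteq> {1..n}" "C \<noteq> {}" "k \<in> {1..m}"
    and "\<forall>i\<in>C. utility n p E s i
      < p k / card (load_set n s k \<union> C) + card {j \<in> load_set n s k \<union> C. E i j}"
  shows "\<not> strong_NE n m p E s"
proof
  assume "strong_NE n m p E s"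
  then obtain i where "i \<in> C"
    and "utility n p E (\<lambda>j. if j \<in> C then k else s j) i \<le> utility n p E s i"
    using assms(1-3) unfolding strong_NE_def by (auto dest!: spec[of _ C] spec[of _ "\<lambda>_. k"])
  then show False
    using assms(1,4) utility_after_move[OF assms(1)] by fastforce
qed

lemma card_load_sets_two_machines:
  assumes "is_state n 2 s"
  shows "card (load_set n s 1) + card (load_set n s 2) = n"
proof -
  have "load_set n s 1 \<union> load_set n s 2 = {1..n}"
    using assms unfolding is_state_def load_set_def by fastforce
  moreover have "load_set n s 1 \<inter> load_set n s 2 = {}"
    unfolding load_set_def by auto
  moreover have "finite (load_set n s 1)" "finite (load_set n s 2)"
    unfolding load_set_def by auto
  ultimately show ?thesis
    by (simp add: card_Un_disjoint[symmetric])
qed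

lemma state_two_machines_cases:
  assumes "is_state n 2 s" "i \<in> {1..n}"
  shows "s i = 1 \<or> s i = 2"
proof -
  have "s i \<in> {1..2}"
    using assms unfolding is_state_def by blast
  then show ?thesis
    by auto
qed

lemma friend_E_iff:
  "friend_E i j \<longleftrightarrow> (i = 1 \<and> j = 2) \<or> (i = 2 \<and> j = 1) \<or> (i = 3 \<and> j = 4) \<or> (i = 4 \<and> j = 3)"
  unfolding friend_E_def by (auto simp: doubleton_eq_iff)

lemma simple_graph_friend_E: "simple_graph 4 friend_E"
  unfolding simple_graph_def friend_E_iff by auto

lemma card_friends_friend_E:
  assumes "friend_E a b"
  shows "card {j \<in> S. friend_E a j} = (if b \<in> S then 1 else 0)"
proof -
  have "{j \<in> S. friend_E a j} = S \<inter> {b}"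
    using assms unfolding friend_E_iff by auto
  then show ?thesis by simp
qed

lemma utility_friend_E:
  assumes "friend_E a b"
  shows "utility 4 p friend_E s a
    = p (s a) / card (load_set 4 s (s a)) + (if s b = s a then 1 else 0)"
proof -
  have "b \<in> load_set 4 s (s a) \<longleftrightarrow> s b = s a"
    using assms unfolding friend_E_iff load_set_def by auto
  then show ?thesis
    by (simp add: utility_def card_friends_friend_E[OF assms])
qed

lemma one_of_split_friends_gains:
  fixes x y :: nat
  assumes "x + y = 4" "0 < x" "0 < y" "0 < \<epsilon>" "\<epsilon> < 4/3" "{k, l} = {1, 2}"
  shows "machine_values \<epsilon> k / x < machine_values \<epsilon> l / (y + 1) + 1
    \<or> machine_values \<epsilon> l / y < machine_values \<epsilon> k / (x + 1) + 1"
proof -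
  \<comment> \<open>The bound on \<open>\<epsilon>\<close> matters only when the friend on machine 1 is alone there: then
    the other friend gains, as \<open>(2 + \<epsilon>) / 2 + 1 > (4 + 3\<epsilon>) / 3\<close>.\<close>
  have "x = 1 \<and> y = 3 \<or> x = 2 \<and> y = 2 \<or> x = 3 \<and> y = 1"
    using assms(1-3) by linarith
  moreover have "k = 1 \<and> l = 2 \<or> k = 2 \<and> l = 1"
    using assms(6) by (auto simp: doubleton_eq_iff)
  ultimately show ?thesis
    using assms(4,5) by (auto simp: machine_values_def field_simps)
qed

lemma join_friend_not_strong_NE:
  assumes "friend_E a b" "s a \<noteq> s b" "s b \<in> {1..m}"
    and "p (s a) / card (load_set 4 s (s a)) < p (s b) / (card (load_set 4 s (s b)) + 1) + 1"
  shows "\<not> strong_NE 4 m p friend_E s"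
proof (rule profitable_move_not_strong_NE)
  have "a \<in> {1..4}"
    using assms(1) unfolding friend_E_iff by auto
  then have "card (load_set 4 s (s b) \<union> {a}) = card (load_set 4 s (s b)) + 1"
    using assms(2) by (simp add: load_set_def)
  moreover have "b \<in> load_set 4 s (s b)"
    using assms(1) unfolding friend_E_iff load_set_def by auto
  then have "card {j \<in> load_set 4 s (s b) \<union> {a}. friend_E a j} = 1"
    by (simp only: card_friends_friend_E[OF assms(1)]) simp
  ultimately show "\<forall>i\<in>{a}. utility 4 p friend_E s i < p (s b) / card (load_set 4 s (s b) \<union> {a})
      + card {j \<in> load_set 4 s (s b) \<union> {a}. friend_E i j}"
    using assms by (simp add: utility_friend_E card_friends_friend_E)
  show "{a} \<subseteq> {1..4}"
    using \<open>a \<in> {1..4}\<close> by simp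
qed (use assms in auto)

lemma split_friends_not_strong_NE:
  assumes "friend_E a b" "s a \<noteq> s b" "0 < \<epsilon>" "\<epsilon> < 4/3"
  shows "\<not> strong_NE 4 2 (machine_values \<epsilon>) friend_E s"
proof
  assume ne: "strong_NE 4 2 (machine_values \<epsilon>) friend_E s"
  then have state: "is_state 4 2 s"
    unfolding strong_NE_def by simp
  have ab: "a \<in> {1..4}" "b \<in> {1..4}" "friend_E b a"
    using assms(1) unfolding friend_E_iff by auto
  then have on_machines: "s a \<in> {1..2}" "s b \<in> {1..2}"
    using state unfolding is_state_def by blast+
  then have machines: "{s a, s b} = {1, 2}"
    using assms(2) by (auto simp: doubleton_eq_iff)
  define x y where "x = card (load_set 4 s (s a))" and "y = card (load_set 4 s (s b))"
  have "x + y = 4"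
    using card_load_sets_two_machines[OF state] machines
    by (auto simp: x_def y_def doubleton_eq_iff)
  moreover have "a \<in> load_set 4 s (s a)" "b \<in> load_set 4 s (s b)"
    using ab by (auto simp: load_set_def)
  then have "0 < x" "0 < y"
    unfolding x_def y_def load_set_def by (auto simp: card_gt_0_iff)
  ultimately consider
      "machine_values \<epsilon> (s a) / x < machine_values \<epsilon> (s b) / (y + 1) + 1"
    | "machine_values \<epsilon> (s b) / y < machine_values \<epsilon> (s a) / (x + 1) + 1"
    using one_of_split_friends_gains assms(3,4) machines by blast
  then show False
    using join_friend_not_strong_NE[OF assms(1,2) on_machines(2)]
      join_friend_not_strong_NE[OF ab(3) assms(2)[symmetric] on_machines(1)] ne
    unfolding x_def y_def by (cases; simp)
qed

lemma all_on_one_machine_not_strong_NE: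
  assumes "\<forall>i\<in>{1..4}. s i = k" "0 < \<epsilon>"
  shows "\<not> strong_NE 4 2 (machine_values \<epsilon>) friend_E s"
proof
  assume ne: "strong_NE 4 2 (machine_values \<epsilon>) friend_E s"
  then have k: "k \<in> {1, 2}"
    using assms(1) unfolding strong_NE_def is_state_def by force
  define k' where "k' = 3 - k"
  have "load_set 4 s k = {1..4}" "load_set 4 s k' = {}"
    using assms(1) k unfolding load_set_def k'_def by auto
  moreover have "machine_values \<epsilon> k / 4 + 1 < machine_values \<epsilon> k'"
    using k assms(2) by (auto simp: k'_def machine_values_def)
  ultimately have "\<forall>i\<in>{1}. utility 4 (machine_values \<epsilon>) friend_E s i
      < machine_values \<epsilon> k' / card (load_set 4 s k' \<union> {1})
        + card {j \<in> load_set 4 s k' \<union> {1}. friend_E i j}"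
    using assms(1) utility_friend_E[of 1 2] card_friends_friend_E[of 1 2]
    by (simp add: friend_E_iff)
  then show False
    using profitable_move_not_strong_NE[of "{1}" 4 k' 2] ne k by (auto simp: k'_def)
qed

lemma friends_alone_on_machine_1_not_strong_NE:
  assumes "friend_E a b" "s a = 1" "s b = 1" "\<forall>i\<in>{1..4} - {a, b}. s i = 2" "0 < \<epsilon>"
  shows "\<not> strong_NE 4 2 (machine_values \<epsilon>) friend_E s"
proof (rule profitable_move_not_strong_NE)
  have ab: "a \<noteq> b" "friend_E b a" "{a, b} \<subseteq> {1..4}"
    using assms(1) unfolding friend_E_iff by auto
  then have "load_set 4 s 1 = {a, b}" and all: "load_set 4 s 2 \<union> {a, b} = {1..4}"
    using assms(2-4) unfolding load_set_def by force+
  then have "utility 4 (machine_values \<epsilon>) friend_E s i = machine_values \<epsilon> 1 / 2 + 1"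
    and "card {j \<in> {1..4}. friend_E i j} = 1"
    if "i \<in> {a, b}" for i
    using that ab assms(2,3) utility_friend_E[OF assms(1)] utility_friend_E[OF ab(2)]
    by (auto simp only: card_friends_friend_E[OF assms(1)] card_friends_friend_E[OF ab(2)]) auto
  moreover have "machine_values \<epsilon> 1 / 2 + 1 < machine_values \<epsilon> 2 / 4 + 1"
    using assms(5) by (simp add: machine_values_def)
  ultimately show "\<forall>i\<in>{a, b}. utility 4 (machine_values \<epsilon>) friend_E s i
      < machine_values \<epsilon> 2 / card (load_set 4 s 2 \<union> {a, b})
        + card {j \<in> load_set 4 s 2 \<union> {a, b}. friend_E i j}"
    unfolding all by simp
  show "{a, b} \<subseteq> {1..4}"
    using ab(3) .
qed auto

lemma friends_together_not_strong_NE: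
  assumes "s 1 = s 2" "s 3 = s 4" "0 < \<epsilon>"
  shows "\<not> strong_NE 4 2 (machine_values \<epsilon>) friend_E s"
proof
  assume ne: "strong_NE 4 2 (machine_values \<epsilon>) friend_E s"
  then have state: "is_state 4 2 s"
    unfolding strong_NE_def by simp
  have players: "{1..4::nat} = {1, 2, 3, 4}"
    by auto
  have "s 1 = 1 \<or> s 1 = 2" "s 3 = 1 \<or> s 3 = 2"
    using state_two_machines_cases[OF state] by simp_all
  then consider "s 1 = s 3" | "s 1 = 1" "s 3 = 2" | "s 1 = 2" "s 3 = 1"
    by fastforce
  then show False
  proof cases
    case 1
    then show False
      using all_on_one_machine_not_strong_NE[of s "s 1"] assms ne unfolding players by simp
  next
    case 2
    then show False
      using friends_alone_on_machine_1_not_strong_NE[of 1 2 s] assms ne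
      unfolding players by (auto simp: friend_E_iff)
  next
    case 3
    then show False
      using friends_alone_on_machine_1_not_strong_NE[of 3 4 s] assms ne
      unfolding players by (auto simp: friend_E_iff)
  qed
qed

theorem theorem20:
  shows "simple_graph 4 friend_E \<and>
    (\<exists>\<delta>>0. \<forall>\<epsilon>::real. 0 < \<epsilon> \<and> \<epsilon> < \<delta> \<longrightarrow>
       \<not> (\<exists>s. strong_NE 4 2 (machine_values \<epsilon>) friend_E s))"
proof (intro conjI exI[of _ "4/3"] allI impI notI)
  show "simple_graph 4 friend_E"
    by (rule simple_graph_friend_E)
  fix \<epsilon> :: real
  assume \<epsilon>: "0 < \<epsilon> \<and> \<epsilon> < 4/3" and "\<exists>s. strong_NE 4 2 (machine_values \<epsilon>) friend_E s"
  then obtain s where "strong_NE 4 2 (machine_values \<epsilon>) friend_E s"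
    by blast
  moreover have "friend_E 1 2" "friend_E 3 4"
    by (simp_all add: friend_E_iff)
  ultimately show False
    using \<epsilon> split_friends_not_strong_NE friends_together_not_strong_NE by metis
qed simp

end
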